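(* Let $\mathsf X$ be a separable Hilbert space, $(\mathsf U,\mathbb U)$ a probability space with $\mathbb U$ non-atomic, $g:\mathsf X\times\mathsf U\to\mathsf X$ Borel with $\int|g(x,u)|^2d\mathbb U(u)\le L(1+|x|^2)$, and suppose $b(x)=\int g(x,u)\,d\mathbb U(u)$ is continuous and $\lambda$-dissipative. Let $(\Omega,\mathcal B,\mathbb P)$ be a standard Borel probability space, $T>0$, $J=\{T/N:N\ge1\}$, and let $(X_\tau)_{\tau\in J}$ be a Stochastic Dissipative Flow for $g$ with associated random variables $X^n_\tau$, $V^k$. For $\tau\in J$ let $\mu_{0,\tau}=(X^0_\tau)_\sharp\mathbb P$, define $\mathbf F[\mu]=(\pi^0,g)_\sharp(\mu\otimes\mathbb U)\in\mathcal P_2(\mathsf X\times\mathsf X)$ for $\mu\in\mathcal P_2(\mathsf X)$, and let $\boldsymbol\eta_\tau\in\mathcal P(\mathrm C([0,T];\mathsf X))$ be the explicit Euler path measure of $\mathbf F$ from $\mu_{0,\tau}$ with step $\tau$. Then $\boldsymbol\eta_\tau=(X_\tau)_\sharp\mathbb P$.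
   Context: $\lambda$-dissipative: $\langle x_1-x_0,b(x_1)-b(x_0)\rangle\le\lambda|x_1-x_0|^2$. $\pi^0(x,u)=x$. Stochastic Dissipative Flow for $g$: maps $X_\tau:\Omega\to\mathrm C([0,T];\mathsf X)$, $\tau\in J$, with random variables $X^n_\tau\in L^2(\Omega;\mathsf X)$ ($0\le n\le N=T/\tau$) and $V^k:\Omega\to\mathsf U$ ($k\in\mathbb N$) such that $(X^0_\tau)_{\tau\in J}$ and $(V^k)_k$ are independent, $(V^k)_\sharp\mathbb P=\mathbb U$, $X^{n+1}_\tau=X^n_\tau+\tau g(X^n_\tau,V^n)$, and $X_\tau=G\circ(X^0_\tau,\dots,X^N_\tau)$ where $G(x_0,\dots,x_N)$ is the curve affine on each $[n\tau,(n+1)\tau]\cap[0,T]$ with $\gamma(n\tau)=x_n$. Explicit Euler path measure: with $\mathsf x(x,v)=x$, $\exp^\tau(x,v)=x+\tau v$, set $M^0=\mu_{0,\tau}$, $\Phi^n=\mathbf F[M^n]$, $M^{n+1}=(\exp^\tau)_\sharp\Phi^n$; $T^n=(\mathsf x,\exp^\tau)_\sharp\Phi^n$ with disintegration $\{T^n_x\}$ w.r.t. its first marginal; $\alpha^1=T^0$, $\alpha^n=\int\delta_{(x_0,\dots,x_{n-1})}\otimes T^{n-1}_{x_{n-1}}d\alpha^{n-1}$; $\boldsymbol\eta_\tau=G_\sharp\alpha^N$. *)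

theory Defs
  imports "HOL-Probability.Probability"
begin

definition standard_borel :: "'a measure \<Rightarrow> bool" where
  "standard_borel M \<longleftrightarrow> (\<exists>X. completely_metrizable_space X \<and> separable_space X \<and>
      topspace X = space M \<and> sets M = sigma_sets (topspace X) {A. openin X A})"

definition nonatomic :: "'a measure \<Rightarrow> bool" where
  "nonatomic M \<longleftrightarrow> (\<forall>A\<in>sets M. 0 < emeasure M A \<longrightarrow>
      (\<exists>B\<in>sets M. B \<subseteq> A \<and> 0 < emeasure M B \<and> emeasure M B < emeasure M A))"

definition dissipative :: "real \<Rightarrow> ('x::real_inner \<Rightarrow> 'x) \<Rightarrow> bool" where
  "dissipative lam b \<longleftrightarrow> (\<forall>x0 x1. inner (x1 - x0) (b x1 - b x0) \<le> lam * (norm (x1 - x0))\<^sup>2)"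

definition steps :: "real \<Rightarrow> real set" where
  "steps T = {T / real N | N. N \<ge> 1}"

definition nsteps :: "real \<Rightarrow> real \<Rightarrow> nat" where
  "nsteps T \<tau> = nat \<lfloor>T / \<tau>\<rfloor>"

text \<open>C([0,T];X): continuous curves on [0,T] (as extensional functions), with the
  sigma algebra induced by the evaluation maps (which is the Borel sigma algebra of the
  sup-norm topology, X being separable).\<close>
definition curve_space :: "real \<Rightarrow> (real \<Rightarrow> 'x::topological_space) measure" where
  "curve_space T = restrict_space (PiM {0..T} (\<lambda>_. borel))
      {\<gamma> \<in> PiE {0..T} (\<lambda>_. UNIV). continuous_on {0..T} \<gamma>}"

definition interp :: "real \<Rightarrow> nat \<Rightarrow> (nat \<Rightarrow> 'x::real_vector) \<Rightarrow> (real \<Rightarrow> 'x)" where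
  "interp T N xs = (\<lambda>t\<in>{0..T}.
      let \<tau> = T / real N; n = nat \<lfloor>t / \<tau>\<rfloor> in
      if n \<ge> N then xs N else xs n + (t / \<tau> - real n) *\<^sub>R (xs (Suc n) - xs n))"

definition Fmap :: "'u measure \<Rightarrow> ('x::{real_normed_vector,second_countable_topology} \<Rightarrow> 'u \<Rightarrow> 'x)
    \<Rightarrow> 'x measure \<Rightarrow> ('x \<times> 'x) measure" where
  "Fmap U g \<mu> = distr (\<mu> \<Otimes>\<^sub>M U) (borel \<Otimes>\<^sub>M borel) (\<lambda>(x, u). (x, g x u))"

definition expt :: "real \<Rightarrow> 'x \<times> 'x \<Rightarrow> 'x::real_vector" where
  "expt \<tau> = (\<lambda>(x, v). x + \<tau> *\<^sub>R v)"

primrec eulerM :: "'u measure \<Rightarrow> ('x::{real_normed_vector,second_countable_topology} \<Rightarrow> 'u \<Rightarrow> 'x)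
    \<Rightarrow> 'x measure \<Rightarrow> real \<Rightarrow> nat \<Rightarrow> 'x measure" where
  "eulerM U g \<mu>0 \<tau> 0 = \<mu>0"
| "eulerM U g \<mu>0 \<tau> (Suc n) = distr (Fmap U g (eulerM U g \<mu>0 \<tau> n)) borel (expt \<tau>)"

definition eulerT :: "'u measure \<Rightarrow> ('x::{real_normed_vector,second_countable_topology} \<Rightarrow> 'u \<Rightarrow> 'x)
    \<Rightarrow> 'x measure \<Rightarrow> real \<Rightarrow> nat \<Rightarrow> ('x \<times> 'x) measure" where
  "eulerT U g \<mu>0 \<tau> n = distr (Fmap U g (eulerM U g \<mu>0 \<tau> n)) (borel \<Otimes>\<^sub>M borel)
      (\<lambda>(x, v). (x, expt \<tau> (x, v)))"

definition is_disintegration :: "('x::topological_space \<times> 'x) measure \<Rightarrow> ('x \<Rightarrow> 'x measure) \<Rightarrow> bool" where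
  "is_disintegration Tm K \<longleftrightarrow> K \<in> borel \<rightarrow>\<^sub>M prob_algebra borel \<and>
      Tm = distr Tm borel fst \<bind> (\<lambda>x. distr (K x) (borel \<Otimes>\<^sub>M borel) (\<lambda>y. (x, y)))"

text \<open>Tuples (x_0,...,x_n) in X^{n+1} are extensional functions on {..n}.\<close>
abbreviation tuples :: "nat \<Rightarrow> (nat \<Rightarrow> 'x::topological_space) measure" where
  "tuples n \<equiv> PiM {..n} (\<lambda>_. borel)"

fun eulerAlpha :: "(nat \<Rightarrow> ('x::topological_space \<times> 'x) measure) \<Rightarrow> (nat \<Rightarrow> 'x \<Rightarrow> 'x measure)
    \<Rightarrow> nat \<Rightarrow> (nat \<Rightarrow> 'x) measure" where
  "eulerAlpha Tm K 0 = undefined"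
| "eulerAlpha Tm K (Suc 0) =
     distr (Tm 0) (tuples 1) (\<lambda>(x, y). (\<lambda>i\<in>{..1}. if i = 0 then x else y))"
| "eulerAlpha Tm K (Suc (Suc n)) =
     eulerAlpha Tm K (Suc n) \<bind>
       (\<lambda>xs. distr (K (Suc n) (xs (Suc n))) (tuples (Suc (Suc n))) (\<lambda>y. xs(Suc (Suc n) := y)))"

text \<open>The explicit Euler path measure from mu0 with step tau = T/N, computed with a given
  choice K of disintegrations of T^0,...,T^{N-1}.\<close>
definition euler_path_measure :: "'u measure \<Rightarrow> ('x::{real_normed_vector,second_countable_topology} \<Rightarrow> 'u \<Rightarrow> 'x)
    \<Rightarrow> 'x measure \<Rightarrow> real \<Rightarrow> nat \<Rightarrow> (nat \<Rightarrow> 'x \<Rightarrow> 'x measure) \<Rightarrow> (real \<Rightarrow> 'x) measure" where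
  "euler_path_measure U g \<mu>0 T N K =
     distr (eulerAlpha (eulerT U g \<mu>0 (T / real N)) K N) (curve_space T) (interp T N)"

definition admissible_kernels :: "'u measure \<Rightarrow> ('x::{real_normed_vector,second_countable_topology} \<Rightarrow> 'u \<Rightarrow> 'x)
    \<Rightarrow> 'x measure \<Rightarrow> real \<Rightarrow> nat \<Rightarrow> (nat \<Rightarrow> 'x \<Rightarrow> 'x measure) \<Rightarrow> bool" where
  "admissible_kernels U g \<mu>0 T N K \<longleftrightarrow>
     (\<forall>n<N. is_disintegration (eulerT U g \<mu>0 (T / real N) n) (K n))"

text \<open>Stochastic Dissipative Flow for g, with its associated random variables
  Xn tau n (= X^n_tau) and V k (= V^k); Xc tau is the curve-valued map X_tau.\<close>
definition SDF :: "'w measure \<Rightarrow> 'u measure \<Rightarrow> ('x::{real_normed_vector,second_countable_topology} \<Rightarrow> 'u \<Rightarrow> 'x)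
    \<Rightarrow> real \<Rightarrow> (real \<Rightarrow> 'w \<Rightarrow> real \<Rightarrow> 'x) \<Rightarrow> (real \<Rightarrow> nat \<Rightarrow> 'w \<Rightarrow> 'x) \<Rightarrow> (nat \<Rightarrow> 'w \<Rightarrow> 'u) \<Rightarrow> bool" where
  "SDF P U g T Xc Xn V \<longleftrightarrow>
     (\<forall>\<tau>\<in>steps T. \<forall>n\<le>nsteps T \<tau>.
        Xn \<tau> n \<in> borel_measurable P \<and> integrable P (\<lambda>\<omega>. (norm (Xn \<tau> n \<omega>))\<^sup>2)) \<and>
     (\<forall>k. V k \<in> P \<rightarrow>\<^sub>M U \<and> distr P U (V k) = U) \<and>
     prob_space.indep_sets P
       (\<lambda>i. case i of
          None \<Rightarrow> {(\<lambda>\<omega>. \<lambda>\<tau>\<in>steps T. Xn \<tau> 0 \<omega>) -` A \<inter> space P | A. A \<in> sets (PiM (steps T) (\<lambda>_. borel))}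
        | Some k \<Rightarrow> {V k -` A \<inter> space P | A. A \<in> sets U}) UNIV \<and>
     (\<forall>\<tau>\<in>steps T. \<forall>n<nsteps T \<tau>. \<forall>\<omega>\<in>space P.
        Xn \<tau> (Suc n) \<omega> = Xn \<tau> n \<omega> + \<tau> *\<^sub>R g (Xn \<tau> n \<omega>) (V n \<omega>)) \<and>
     (\<forall>\<tau>\<in>steps T. \<forall>\<omega>\<in>space P.
        Xc \<tau> \<omega> = interp T (nsteps T \<tau>) (\<lambda>n. Xn \<tau> n \<omega>))"

end

theory Submission
  imports Defs
begin

text \<open>
  The flow is a Markov chain: \<open>X\<^sup>n\<^sup>+\<^sup>1 = X\<^sup>n + \<tau> g(X\<^sup>n, V\<^sup>n)\<close>, and since
  \<open>(X\<^sup>0, \<dots>, X\<^sup>n)\<close> is a measurable function of \<open>X\<^sup>0, V\<^sup>0, \<dots>, V\<^sup>n\<^sup>-\<^sup>1\<close>, it is independent of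
  \<open>V\<^sup>n\<close>. Hence the joint law of \<open>(X\<^sup>0, \<dots>, X\<^sup>n, V\<^sup>n)\<close> is a product, and the law of
  \<open>(X\<^sup>0, \<dots>, X\<^sup>n\<^sup>+\<^sup>1)\<close> is obtained from that of \<open>(X\<^sup>0, \<dots>, X\<^sup>n)\<close> by the kernel
  \<open>x \<mapsto> law of x + \<tau> g(x, \<cdot>)\<close> acting on the last coordinate. The same argument shows
  \<open>M\<^sup>n = law of X\<^sup>n\<close>, and that this kernel disintegrates \<open>T\<^sup>n\<close>. Disintegrations on a second
  countable space are unique almost everywhere, so every admissible choice of kernels builds
  \<open>\<alpha>\<^sup>N = law of (X\<^sup>0, \<dots>, X\<^sup>N)\<close>, and pushing forward by the interpolation \<open>G\<close> gives the
  law of \<open>X\<^sub>\<tau>\<close>.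

  Only the measurability of \<open>g\<close> is used: the growth bound, continuity and dissipativity of
  \<open>b\<close>, non-atomicity of \<open>U\<close> and the standard Borel structure of \<open>\<Omega>\<close> matter for the
  existence of the flow, not for identifying its law.
\<close>

section \<open>Product laws and independence\<close>

lemma bind_distr_eq_distr_pair_measure:
  assumes M: "prob_space M" and U: "prob_space U" and h: "h \<in> M \<Otimes>\<^sub>M U \<rightarrow>\<^sub>M N"
  shows "M \<bind> (\<lambda>x. distr U N (\<lambda>u. h (x, u))) = distr (M \<Otimes>\<^sub>M U) N h"
proof -
  interpret pair_prob_space M U
    using M U by (simp add: pair_prob_space_def pair_sigma_finite_def prob_space_imp_sigma_finite)
  have kernel: "(\<lambda>x. distr U N (\<lambda>u. h (x, u))) \<in> M \<rightarrow>\<^sub>M subprob_algebra N"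
  proof (rule measurable_distr2)
    show "(\<lambda>(x, u). h (x, u)) \<in> M \<Otimes>\<^sub>M U \<rightarrow>\<^sub>M N" using h by simp
    show "(\<lambda>x. U) \<in> M \<rightarrow>\<^sub>M subprob_algebra U"
      by (rule measurable_const) (simp add: space_subprob_algebra U prob_space_imp_subprob_space)
  qed
  show ?thesis
  proof (rule measure_eqI)
    show sets_eq: "sets (M \<bind> (\<lambda>x. distr U N (\<lambda>u. h (x, u)))) = sets (distr (M \<Otimes>\<^sub>M U) N h)"
      using sets_bind_measurable[OF kernel] M1.not_empty by simp
    fix A assume "A \<in> sets (M \<bind> (\<lambda>x. distr U N (\<lambda>u. h (x, u))))"
    then have A: "A \<in> sets N" using sets_eq by simp
    have "emeasure (M \<bind> (\<lambda>x. distr U N (\<lambda>u. h (x, u)))) A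
        = (\<integral>\<^sup>+x. emeasure (distr U N (\<lambda>u. h (x, u))) A \<partial>M)"
      using emeasure_bind[OF M1.not_empty kernel A] .
    also have "\<dots> = (\<integral>\<^sup>+x. emeasure U (Pair x -` (h -` A \<inter> space (M \<Otimes>\<^sub>M U))) \<partial>M)"
      using h A by (intro nn_integral_cong)
        (auto simp: emeasure_distr space_pair_measure intro!: arg_cong2[where f=emeasure])
    also have "\<dots> = emeasure (M \<Otimes>\<^sub>M U) (h -` A \<inter> space (M \<Otimes>\<^sub>M U))"
      using h A by (intro M2.emeasure_pair_measure_alt[symmetric]) auto
    also have "\<dots> = emeasure (distr (M \<Otimes>\<^sub>M U) N h) A"
      using h A by (simp add: emeasure_distr)
    finally show "emeasure (M \<bind> (\<lambda>x. distr U N (\<lambda>u. h (x, u)))) A = emeasure (distr (M \<Otimes>\<^sub>M U) N h) A" .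
  qed
qed

lemma Int_stable_vimage_sets: "Int_stable {f -` A \<inter> S | A. A \<in> sets M}"
  unfolding Int_stable_def
proof safe
  fix A B assume "A \<in> sets M" "B \<in> sets M"
  then show "\<exists>C. f -` A \<inter> S \<inter> (f -` B \<inter> S) = f -` C \<inter> S \<and> C \<in> sets M"
    by (intro exI[of _ "A \<inter> B"]) auto
qed

(* A variant of indep_var_distribution_eq for random variables with different codomain types. *)
lemma (in prob_space) distr_Pair_eq_pair_measure_if_indep_set:
  assumes f: "random_variable S f" and h: "random_variable T h" and indep: "indep_set F G"
    and F: "{f -` A \<inter> space M | A. A \<in> sets S} \<subseteq> F"
    and G: "{h -` B \<inter> space M | B. B \<in> sets T} \<subseteq> G"
  shows "distr M (S \<Otimes>\<^sub>M T) (\<lambda>\<omega>. (f \<omega>, h \<omega>)) = distr M S f \<Otimes>\<^sub>M distr M T h"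
proof (rule pair_measure_eqI[symmetric])
  show "sigma_finite_measure (distr M S f)" "sigma_finite_measure (distr M T h)"
    using prob_space_distr[OF f] prob_space_distr[OF h] by (auto intro: prob_space_imp_sigma_finite)
  show "sets (distr M S f \<Otimes>\<^sub>M distr M T h) = sets (distr M (S \<Otimes>\<^sub>M T) (\<lambda>\<omega>. (f \<omega>, h \<omega>)))"
    by (simp cong: sets_pair_measure_cong)
  fix A B assume "A \<in> sets (distr M S f)" "B \<in> sets (distr M T h)"
  then have A: "A \<in> sets S" and B: "B \<in> sets T" by simp_all
  have "(\<lambda>\<omega>. (f \<omega>, h \<omega>)) -` (A \<times> B) \<inter> space M = (f -` A \<inter> space M) \<inter> (h -` B \<inter> space M)"
    by auto
  then have "emeasure (distr M (S \<Otimes>\<^sub>M T) (\<lambda>\<omega>. (f \<omega>, h \<omega>))) (A \<times> B)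
      = prob ((f -` A \<inter> space M) \<inter> (h -` B \<inter> space M))"
    using A B by (simp add: emeasure_distr[OF measurable_Pair[OF f h]] emeasure_eq_measure)
  also have "\<dots> = prob (f -` A \<inter> space M) * prob (h -` B \<inter> space M)"
    using indep_setD[OF indep, of "f -` A \<inter> space M" "h -` B \<inter> space M"] A B F G by auto
  also have "\<dots> = emeasure (distr M S f) A * emeasure (distr M T h) B"
    using A B by (simp add: emeasure_distr[OF f] emeasure_distr[OF h] emeasure_eq_measure ennreal_mult)
  finally show "emeasure (distr M S f) A * emeasure (distr M T h) B
      = emeasure (distr M (S \<Otimes>\<^sub>M T) (\<lambda>\<omega>. (f \<omega>, h \<omega>))) (A \<times> B)" ..
qed

lemma measurable_extend_tuple:
  "(\<lambda>(xs, y). xs(Suc m := y)) \<in> tuples m \<Otimes>\<^sub>M borel \<rightarrow>\<^sub>M (tuples (Suc m) :: (nat \<Rightarrow> 'x::topological_space) measure)"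
  using measurable_add_dim[of "Suc m" "{..m}" "\<lambda>_. borel :: 'x measure"] by (simp add: atMost_Suc)

lemma measurable_extend_tuple_kernel:
  fixes L :: "'x::topological_space \<Rightarrow> 'x measure"
  assumes L: "L \<in> borel \<rightarrow>\<^sub>M prob_algebra borel" and M: "sets M = sets (tuples m)"
  shows "(\<lambda>xs. distr (L (xs m)) (tuples (Suc m)) (\<lambda>y. xs(Suc m := y)))
    \<in> M \<rightarrow>\<^sub>M subprob_algebra (tuples (Suc m))"
  unfolding measurable_cong_sets[OF M refl]
proof (rule measurable_distr2[OF measurable_extend_tuple])
  show "(\<lambda>xs. L (xs m)) \<in> tuples m \<rightarrow>\<^sub>M subprob_algebra borel"
    using measurable_compose[OF measurable_component_singleton[of m "{..m}"] measurable_prob_algebraD[OF L]]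
    by simp
qed

section \<open>Uniqueness of disintegrations\<close>

lemma borel_countable_Int_stable_generator:
  obtains G :: "'x::second_countable_topology set set"
  where "countable G" "Int_stable G" "UNIV \<in> G" "sets borel = sigma_sets UNIV G"
proof -
  obtain B :: "'x set set" where B: "countable B" "topological_basis B"
    using ex_countable_basis by blast
  define G where "G = Inter ` {b. finite b \<and> b \<subseteq> B}"
  have borel_B: "sets (borel :: 'x measure) = sigma_sets UNIV B"
    by (subst borel_eq_countable_basis[OF B]) (simp add: sets_measure_of)
  show thesis
  proof (rule that)
    show "countable G"
      unfolding G_def by (intro countable_image countable_Collect_finite_subset B)
    show "Int_stable G"
      unfolding Int_stable_def G_def
    proof safe
      fix b1 b2 assume "finite b1" "b1 \<subseteq> B" "finite b2" "b2 \<subseteq> B"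
      then show "\<Inter> b1 \<inter> \<Inter> b2 \<in> Inter ` {b. finite b \<and> b \<subseteq> B}"
        by (intro image_eqI[of _ _ "b1 \<union> b2"]) auto
    qed
    show "UNIV \<in> G" unfolding G_def by (intro image_eqI[of _ _ "{}"]) auto
    show "sets borel = sigma_sets UNIV G"
    proof
      have "B \<subseteq> G" unfolding G_def by (auto intro!: image_eqI[of _ Inter "{b}" for b])
      then show "sets borel \<subseteq> sigma_sets UNIV G" unfolding borel_B by (rule sigma_sets_mono')
      have "G \<subseteq> sets borel"
        unfolding G_def using B(2) by (auto intro!: borel_open open_Inter dest: topological_basis_open)
      then show "sigma_sets UNIV G \<subseteq> sets borel" unfolding borel_B by (rule sigma_sets_mono)
    qed
  qed
qed

lemma emeasure_bind_graph_Times: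
  fixes M :: "'x::topological_space measure" and L :: "'x \<Rightarrow> 'y::topological_space measure"
  assumes "sets M = sets borel" and L: "L \<in> M \<rightarrow>\<^sub>M subprob_algebra borel"
    and M: "space M \<noteq> {}" and A: "A \<in> sets borel" and B: "B \<in> sets borel"
  shows "emeasure (M \<bind> (\<lambda>x. distr (L x) (borel \<Otimes>\<^sub>M borel) (Pair x))) (A \<times> B)
    = (\<integral>\<^sup>+x. emeasure (L x) B * indicator A x \<partial>M)"
proof -
  have graph: "(\<lambda>x. distr (L x) (borel \<Otimes>\<^sub>M borel) (Pair x)) \<in> M \<rightarrow>\<^sub>M subprob_algebra (borel \<Otimes>\<^sub>M borel)"
  proof (rule measurable_distr2[OF _ L])
    show "(\<lambda>(x, y). (x, y)) \<in> M \<Otimes>\<^sub>M borel \<rightarrow>\<^sub>M borel \<Otimes>\<^sub>M borel"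
      by (simp add: measurable_cong_sets[OF sets_pair_measure_cong[OF assms(1) refl] refl])
  qed
  have "emeasure (M \<bind> (\<lambda>x. distr (L x) (borel \<Otimes>\<^sub>M borel) (Pair x))) (A \<times> B)
      = (\<integral>\<^sup>+x. emeasure (distr (L x) (borel \<Otimes>\<^sub>M borel) (Pair x)) (A \<times> B) \<partial>M)"
    using A B by (intro emeasure_bind[OF M graph]) auto
  also have "\<dots> = (\<integral>\<^sup>+x. emeasure (L x) B * indicator A x \<partial>M)"
  proof (intro nn_integral_cong)
    fix x assume "x \<in> space M"
    then have sets_L: "sets (L x) = sets borel" using sets_kernel[OF L] by blast
    then have "Pair x \<in> L x \<rightarrow>\<^sub>M borel \<Otimes>\<^sub>M borel"
      by (simp add: measurable_cong_sets[OF sets_L refl])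
    then show "emeasure (distr (L x) (borel \<Otimes>\<^sub>M borel) (Pair x)) (A \<times> B) = emeasure (L x) B * indicator A x"
      using A B sets_eq_imp_space_eq[OF sets_L]
      by (subst emeasure_distr) (auto split: split_indicator)
  qed
  finally show ?thesis .
qed

lemma AE_emeasure_eq_if_bind_graph_eq:
  fixes M :: "'x::topological_space measure" and K K' :: "'x \<Rightarrow> 'y::topological_space measure"
  assumes M: "prob_space M" and sets_M: "sets M = sets borel"
    and K: "K \<in> M \<rightarrow>\<^sub>M subprob_algebra borel" and K': "K' \<in> M \<rightarrow>\<^sub>M subprob_algebra borel"
    and eq: "M \<bind> (\<lambda>x. distr (K x) (borel \<Otimes>\<^sub>M borel) (Pair x))
           = M \<bind> (\<lambda>x. distr (K' x) (borel \<Otimes>\<^sub>M borel) (Pair x))"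
    and B: "B \<in> sets borel"
  shows "AE x in M. emeasure (K x) B = emeasure (K' x) B"
proof -
  interpret prob_space M by fact
  show ?thesis
  proof (rule density_unique)
    show "(\<lambda>x. emeasure (K x) B) \<in> borel_measurable M" "(\<lambda>x. emeasure (K' x) B) \<in> borel_measurable M"
      using K K' B by (auto intro: measurable_emeasure_subprob_algebra)
    show "density M (\<lambda>x. emeasure (K x) B) = density M (\<lambda>x. emeasure (K' x) B)"
    proof (rule measure_eqI)
      fix A assume "A \<in> sets (density M (\<lambda>x. emeasure (K x) B))"
      then have A: "A \<in> sets M" "A \<in> sets borel" using sets_M by auto
      show "emeasure (density M (\<lambda>x. emeasure (K x) B)) A = emeasure (density M (\<lambda>x. emeasure (K' x) B)) A"
        using emeasure_bind_graph_Times[OF sets_M K not_empty A(2) B]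
          emeasure_bind_graph_Times[OF sets_M K' not_empty A(2) B] eq K K' B A
        by (simp add: emeasure_density measurable_emeasure_subprob_algebra)
    qed simp
  qed
qed

lemma disintegration_AE_unique:
  fixes M :: "'x::second_countable_topology measure" and K K' :: "'x \<Rightarrow> 'x measure"
  assumes M: "prob_space M" and sets_M: "sets M = sets borel"
    and K: "K \<in> borel \<rightarrow>\<^sub>M prob_algebra borel" and K': "K' \<in> borel \<rightarrow>\<^sub>M prob_algebra borel"
    and eq: "M \<bind> (\<lambda>x. distr (K x) (borel \<Otimes>\<^sub>M borel) (Pair x))
           = M \<bind> (\<lambda>x. distr (K' x) (borel \<Otimes>\<^sub>M borel) (Pair x))"
  shows "AE x in M. K x = K' x"
proof -
  have kernels: "K \<in> M \<rightarrow>\<^sub>M subprob_algebra borel" "K' \<in> M \<rightarrow>\<^sub>M subprob_algebra borel"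
    using measurable_prob_algebraD[OF K] measurable_prob_algebraD[OF K']
    by (simp_all add: measurable_cong_sets[OF sets_M refl])
  obtain G :: "'x set set"
    where G: "countable G" "Int_stable G" "UNIV \<in> G" "sets borel = sigma_sets UNIV G"
    by (rule borel_countable_Int_stable_generator)
  have "AE x in M. \<forall>B\<in>G. emeasure (K x) B = emeasure (K' x) B"
    using G(1) AE_emeasure_eq_if_bind_graph_eq[OF M sets_M kernels eq]
    by (subst AE_ball_countable) (auto simp: G(4) intro: sigma_sets.Basic)
  then show ?thesis
  proof (rule AE_mp[OF _ AE_I2], safe)
    fix x assume x: "x \<in> space M" and agree: "\<forall>B\<in>G. emeasure (K x) B = emeasure (K' x) B"
    have sets_K: "sets (K x) = sets borel" "sets (K' x) = sets borel"
      using sets_kernel[OF kernels(1) x] sets_kernel[OF kernels(2) x] by auto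
    have "prob_space (K x)"
      using measurable_space[OF K, of x] x by (auto simp: space_prob_algebra sets_eq_imp_space_eq[OF sets_M])
    then have "emeasure (K x) UNIV \<noteq> \<infinity>"
      using prob_space.emeasure_space_1 sets_eq_imp_space_eq[OF sets_K(1)] by fastforce
    then show "K x = K' x"
      using G agree sets_K by (intro measure_eqI_generator_eq_countable[of G UNIV _ _ "{UNIV}"]) auto
  qed
qed

section \<open>The explicit Euler scheme\<close>

definition step_kernel :: "'u measure \<Rightarrow> ('x::{real_normed_vector,second_countable_topology} \<Rightarrow> 'u \<Rightarrow> 'x)
    \<Rightarrow> real \<Rightarrow> 'x \<Rightarrow> 'x measure" where
  "step_kernel U g \<tau> x = distr U borel (\<lambda>u. x + \<tau> *\<^sub>R g x u)"

lemma measurable_euler_step: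
  fixes g :: "'x::{real_normed_vector,second_countable_topology} \<Rightarrow> 'u \<Rightarrow> 'x"
  assumes g: "(\<lambda>(x, u). g x u) \<in> borel_measurable (borel \<Otimes>\<^sub>M U)" and sets_M: "sets M = sets borel"
  shows "(\<lambda>(x, u). x + \<tau> *\<^sub>R g x u) \<in> borel_measurable (M \<Otimes>\<^sub>M U)"
    and "(\<lambda>(x, u). (x, x + \<tau> *\<^sub>R g x u)) \<in> M \<Otimes>\<^sub>M U \<rightarrow>\<^sub>M borel \<Otimes>\<^sub>M borel"
    and "(\<lambda>(x, u). (x, g x u)) \<in> M \<Otimes>\<^sub>M U \<rightarrow>\<^sub>M borel \<Otimes>\<^sub>M borel"
proof -
  have g_M: "(\<lambda>(x, u). g x u) \<in> borel_measurable (M \<Otimes>\<^sub>M U)"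
    using g by (simp add: measurable_cong_sets[OF sets_pair_measure_cong[OF sets_M refl] refl])
  have fst_M: "fst \<in> borel_measurable (M \<Otimes>\<^sub>M U)"
    using measurable_fst[of M U] by (simp add: measurable_cong_sets[OF refl sets_M])
  have "(\<lambda>p. fst p + \<tau> *\<^sub>R (case p of (x, u) \<Rightarrow> g x u)) \<in> borel_measurable (M \<Otimes>\<^sub>M U)"
    using fst_M g_M by measurable
  then show step: "(\<lambda>(x, u). x + \<tau> *\<^sub>R g x u) \<in> borel_measurable (M \<Otimes>\<^sub>M U)"
    by (simp add: case_prod_beta')
  show "(\<lambda>(x, u). (x, x + \<tau> *\<^sub>R g x u)) \<in> M \<Otimes>\<^sub>M U \<rightarrow>\<^sub>M borel \<Otimes>\<^sub>M borel"
    using measurable_Pair[OF fst_M step] by (simp add: case_prod_beta')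
  show "(\<lambda>(x, u). (x, g x u)) \<in> M \<Otimes>\<^sub>M U \<rightarrow>\<^sub>M borel \<Otimes>\<^sub>M borel"
    using measurable_Pair[OF fst_M g_M] by (simp add: case_prod_beta')
qed

lemma measurable_expt:
  "(expt \<tau> :: 'x::{real_normed_vector,second_countable_topology} \<times> 'x \<Rightarrow> 'x) \<in> borel \<Otimes>\<^sub>M borel \<rightarrow>\<^sub>M borel"
  unfolding expt_def by measurable

lemma sets_eulerM: "sets \<mu>0 = sets borel \<Longrightarrow> sets (eulerM U g \<mu>0 \<tau> n) = sets borel"
  by (cases n) simp_all

lemma prob_space_eulerM:
  fixes g :: "'x::{real_normed_vector,second_countable_topology} \<Rightarrow> 'u \<Rightarrow> 'x"
  assumes U: "prob_space U" and g: "(\<lambda>(x, u). g x u) \<in> borel_measurable (borel \<Otimes>\<^sub>M U)"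
    and \<mu>0: "prob_space \<mu>0" "sets \<mu>0 = sets borel"
  shows "prob_space (eulerM U g \<mu>0 \<tau> n)"
proof (induction n)
  case 0
  then show ?case using \<mu>0 by simp
next
  case (Suc n)
  let ?M = "eulerM U g \<mu>0 \<tau> n"
  have "prob_space (?M \<Otimes>\<^sub>M U)" using Suc U by (simp add: prob_space_pair)
  then have "prob_space (Fmap U g ?M)"
    unfolding Fmap_def
    by (rule prob_space.prob_space_distr[OF _ measurable_euler_step(3)[OF g sets_eulerM[OF \<mu>0(2)]]])
  moreover have "expt \<tau> \<in> Fmap U g ?M \<rightarrow>\<^sub>M borel"
    using measurable_expt measurable_cong_sets[of "Fmap U g ?M" "borel \<Otimes>\<^sub>M borel" borel borel]
    by (simp add: Fmap_def)
  ultimately show ?case by (simp add: prob_space.prob_space_distr)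
qed

lemma eulerM_Suc_eq_distr_pair:
  fixes g :: "'x::{real_normed_vector,second_countable_topology} \<Rightarrow> 'u \<Rightarrow> 'x"
  assumes g: "(\<lambda>(x, u). g x u) \<in> borel_measurable (borel \<Otimes>\<^sub>M U)" and \<mu>0: "sets \<mu>0 = sets borel"
  shows "eulerM U g \<mu>0 \<tau> (Suc n) = distr (eulerM U g \<mu>0 \<tau> n \<Otimes>\<^sub>M U) borel (\<lambda>(x, u). x + \<tau> *\<^sub>R g x u)"
  unfolding eulerM.simps Fmap_def
  by (subst distr_distr[OF measurable_expt measurable_euler_step(3)[OF g sets_eulerM[OF \<mu>0]]])
    (simp add: comp_def expt_def case_prod_beta')

lemma eulerT_eq_distr_pair:
  fixes g :: "'x::{real_normed_vector,second_countable_topology} \<Rightarrow> 'u \<Rightarrow> 'x"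
  assumes g: "(\<lambda>(x, u). g x u) \<in> borel_measurable (borel \<Otimes>\<^sub>M U)" and \<mu>0: "sets \<mu>0 = sets borel"
  shows "eulerT U g \<mu>0 \<tau> n
    = distr (eulerM U g \<mu>0 \<tau> n \<Otimes>\<^sub>M U) (borel \<Otimes>\<^sub>M borel) (\<lambda>(x, u). (x, x + \<tau> *\<^sub>R g x u))"
proof -
  have "(\<lambda>(x, v). (x, expt \<tau> (x, v))) \<in> borel \<Otimes>\<^sub>M borel \<rightarrow>\<^sub>M (borel \<Otimes>\<^sub>M (borel :: 'x measure))"
    unfolding expt_def by measurable
  then show ?thesis
    unfolding eulerT_def Fmap_def
    by (subst distr_distr[OF _ measurable_euler_step(3)[OF g sets_eulerM[OF \<mu>0]]])
      (simp_all add: comp_def expt_def case_prod_beta')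
qed

lemma measurable_step_kernel:
  fixes g :: "'x::{real_normed_vector,second_countable_topology} \<Rightarrow> 'u \<Rightarrow> 'x"
  assumes U: "prob_space U" and g: "(\<lambda>(x, u). g x u) \<in> borel_measurable (borel \<Otimes>\<^sub>M U)"
  shows "step_kernel U g \<tau> \<in> borel \<rightarrow>\<^sub>M prob_algebra borel"
  unfolding step_kernel_def
proof (rule measurable_distr_prob_space2)
  show "(\<lambda>x. U) \<in> borel \<rightarrow>\<^sub>M prob_algebra U"
    by (rule measurable_const) (simp add: space_prob_algebra U)
  show "(\<lambda>(x, u). x + \<tau> *\<^sub>R g x u) \<in> borel \<Otimes>\<^sub>M U \<rightarrow>\<^sub>M borel"
    using measurable_euler_step(1)[OF g refl] .
qed

lemma
  fixes g :: "'x::{real_normed_vector,second_countable_topology} \<Rightarrow> 'u \<Rightarrow> 'x"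
  assumes U: "prob_space U" and g: "(\<lambda>(x, u). g x u) \<in> borel_measurable (borel \<Otimes>\<^sub>M U)"
    and \<mu>0: "prob_space \<mu>0" "sets \<mu>0 = sets borel"
  shows distr_fst_eulerT: "distr (eulerT U g \<mu>0 \<tau> n) borel fst = eulerM U g \<mu>0 \<tau> n"
    and disintegration_step_kernel: "is_disintegration (eulerT U g \<mu>0 \<tau> n) (step_kernel U g \<tau>)"
proof -
  let ?M = "eulerM U g \<mu>0 \<tau> n" and ?step = "\<lambda>(x, u). (x, x + \<tau> *\<^sub>R g x u)"
  have sets_M: "sets ?M = sets borel" using sets_eulerM[OF \<mu>0(2)] .
  have prob_M: "prob_space ?M" using prob_space_eulerM[OF U g \<mu>0] .
  interpret pair_prob_space ?M U
    using prob_M U by (simp add: pair_prob_space_def pair_sigma_finite_def prob_space_imp_sigma_finite)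
  have T_eq: "eulerT U g \<mu>0 \<tau> n = distr (?M \<Otimes>\<^sub>M U) (borel \<Otimes>\<^sub>M borel) ?step"
    using eulerT_eq_distr_pair[OF g \<mu>0(2)] .
  have "distr (eulerT U g \<mu>0 \<tau> n) borel fst = distr (?M \<Otimes>\<^sub>M U) borel (fst \<circ> ?step)"
    unfolding T_eq by (rule distr_distr[OF measurable_fst'' measurable_euler_step(2)[OF g sets_M]]) simp
  also have "\<dots> = distr (?M \<Otimes>\<^sub>M U) ?M fst"
    by (rule distr_cong) (auto simp: sets_M)
  also have "\<dots> = ?M" by (rule M2.distr_pair_fst)
  finally show fst_eq: "distr (eulerT U g \<mu>0 \<tau> n) borel fst = ?M" .
  have "?M \<bind> (\<lambda>x. distr (step_kernel U g \<tau> x) (borel \<Otimes>\<^sub>M borel) (Pair x))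
      = ?M \<bind> (\<lambda>x. distr U (borel \<Otimes>\<^sub>M borel) (\<lambda>u. ?step (x, u)))"
  proof (rule bind_cong[OF refl])
    fix x
    have "(\<lambda>u. x + \<tau> *\<^sub>R g x u) \<in> U \<rightarrow>\<^sub>M borel"
      using measurable_Pair2[OF measurable_euler_step(1)[OF g refl], of x] by simp
    then show "distr (step_kernel U g \<tau> x) (borel \<Otimes>\<^sub>M borel) (Pair x) = distr U (borel \<Otimes>\<^sub>M borel) (\<lambda>u. ?step (x, u))"
      unfolding step_kernel_def by (subst distr_distr) (auto simp: comp_def)
  qed
  also have "\<dots> = eulerT U g \<mu>0 \<tau> n"
    unfolding T_eq by (rule bind_distr_eq_distr_pair_measure[OF prob_M U measurable_euler_step(2)[OF g sets_M]])
  finally show "is_disintegration (eulerT U g \<mu>0 \<tau> n) (step_kernel U g \<tau>)"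
    unfolding is_disintegration_def fst_eq using measurable_step_kernel[OF U g] by simp
qed

lemma disintegration_eulerT_AE_step_kernel:
  fixes g :: "'x::{real_normed_vector,second_countable_topology} \<Rightarrow> 'u \<Rightarrow> 'x"
  assumes U: "prob_space U" and g: "(\<lambda>(x, u). g x u) \<in> borel_measurable (borel \<Otimes>\<^sub>M U)"
    and \<mu>0: "prob_space \<mu>0" "sets \<mu>0 = sets borel"
    and K: "is_disintegration (eulerT U g \<mu>0 \<tau> n) K"
  shows "AE x in eulerM U g \<mu>0 \<tau> n. K x = step_kernel U g \<tau> x"
proof (rule disintegration_AE_unique)
  show "prob_space (eulerM U g \<mu>0 \<tau> n)" "sets (eulerM U g \<mu>0 \<tau> n) = sets borel"
    using prob_space_eulerM[OF U g \<mu>0] sets_eulerM[OF \<mu>0(2)] .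
  show "K \<in> borel \<rightarrow>\<^sub>M prob_algebra borel" using K unfolding is_disintegration_def by simp
  show "step_kernel U g \<tau> \<in> borel \<rightarrow>\<^sub>M prob_algebra borel" using measurable_step_kernel[OF U g] .
  show "eulerM U g \<mu>0 \<tau> n \<bind> (\<lambda>x. distr (K x) (borel \<Otimes>\<^sub>M borel) (Pair x))
      = eulerM U g \<mu>0 \<tau> n \<bind> (\<lambda>x. distr (step_kernel U g \<tau> x) (borel \<Otimes>\<^sub>M borel) (Pair x))"
    using K disintegration_step_kernel[OF U g \<mu>0] distr_fst_eulerT[OF U g \<mu>0]
    unfolding is_disintegration_def by metis
qed

definition euler_extend :: "('x::real_vector \<Rightarrow> 'u \<Rightarrow> 'x) \<Rightarrow> real \<Rightarrow> nat
    \<Rightarrow> (nat \<Rightarrow> 'x) \<times> 'u \<Rightarrow> nat \<Rightarrow> 'x" where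
  "euler_extend g \<tau> m = (\<lambda>(xs, u). xs(Suc m := xs m + \<tau> *\<^sub>R g (xs m) u))"

lemma measurable_euler_extend:
  fixes g :: "'x::{real_normed_vector,second_countable_topology} \<Rightarrow> 'u \<Rightarrow> 'x"
  assumes g: "(\<lambda>(x, u). g x u) \<in> borel_measurable (borel \<Otimes>\<^sub>M U)"
  shows "euler_extend g \<tau> m \<in> tuples m \<Otimes>\<^sub>M U \<rightarrow>\<^sub>M tuples (Suc m)"
proof -
  have "(\<lambda>p. (fst p m, snd p)) \<in> tuples m \<Otimes>\<^sub>M U \<rightarrow>\<^sub>M borel \<Otimes>\<^sub>M U"
    by (intro measurable_Pair measurable_compose[OF measurable_fst measurable_component_singleton]
        measurable_snd) simp
  from measurable_compose[OF this measurable_euler_step(1)[OF g refl]]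
  have "(\<lambda>p. (fst p, fst p m + \<tau> *\<^sub>R g (fst p m) (snd p))) \<in> tuples m \<Otimes>\<^sub>M U \<rightarrow>\<^sub>M tuples m \<Otimes>\<^sub>M borel"
    by (intro measurable_Pair measurable_fst) simp
  from measurable_compose[OF this measurable_extend_tuple] show ?thesis
    by (simp add: euler_extend_def case_prod_beta')
qed

lemma bind_step_kernel_eq_distr_pair_measure:
  fixes g :: "'x::{real_normed_vector,second_countable_topology} \<Rightarrow> 'u \<Rightarrow> 'x"
  assumes U: "prob_space U" and g: "(\<lambda>(x, u). g x u) \<in> borel_measurable (borel \<Otimes>\<^sub>M U)"
    and M: "prob_space M" "sets M = sets (tuples m)"
  shows "M \<bind> (\<lambda>xs. distr (step_kernel U g \<tau> (xs m)) (tuples (Suc m)) (\<lambda>y. xs(Suc m := y)))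
    = distr (M \<Otimes>\<^sub>M U) (tuples (Suc m)) (euler_extend g \<tau> m)"
proof -
  have "M \<bind> (\<lambda>xs. distr (step_kernel U g \<tau> (xs m)) (tuples (Suc m)) (\<lambda>y. xs(Suc m := y)))
      = M \<bind> (\<lambda>xs. distr U (tuples (Suc m)) (\<lambda>u. euler_extend g \<tau> m (xs, u)))"
  proof (rule bind_cong[OF refl])
    fix xs assume "xs \<in> space M"
    then have "(\<lambda>y. xs(Suc m := y)) \<in> borel \<rightarrow>\<^sub>M tuples (Suc m)"
      using measurable_Pair2[OF measurable_extend_tuple] sets_eq_imp_space_eq[OF M(2)] by simp
    moreover have "(\<lambda>u. xs m + \<tau> *\<^sub>R g (xs m) u) \<in> U \<rightarrow>\<^sub>M borel"
      using measurable_Pair2[OF measurable_euler_step(1)[OF g refl], of "xs m"] by simp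
    ultimately show "distr (step_kernel U g \<tau> (xs m)) (tuples (Suc m)) (\<lambda>y. xs(Suc m := y))
        = distr U (tuples (Suc m)) (\<lambda>u. euler_extend g \<tau> m (xs, u))"
      unfolding step_kernel_def euler_extend_def by (simp add: distr_distr comp_def)
  qed
  also have "\<dots> = distr (M \<Otimes>\<^sub>M U) (tuples (Suc m)) (euler_extend g \<tau> m)"
    using measurable_euler_extend[OF g]
    by (intro bind_distr_eq_distr_pair_measure M(1) U)
      (simp add: measurable_cong_sets[OF sets_pair_measure_cong[OF M(2) refl] refl])
  finally show ?thesis .
qed

lemma steps_nsteps:
  assumes "T > 0" and "\<tau> \<in> steps T"
  shows "nsteps T \<tau> \<ge> 1" and "T / real (nsteps T \<tau>) = \<tau>"
proof -
  obtain N where N: "\<tau> = T / real N" "N \<ge> 1" using assms(2) unfolding steps_def by auto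
  then have "nsteps T \<tau> = N" using assms(1) by (simp add: nsteps_def)
  then show "nsteps T \<tau> \<ge> 1" and "T / real (nsteps T \<tau>) = \<tau>" using N by simp_all
qed

section \<open>Piecewise affine interpolation\<close>

(* The interpolation G as a sum of clipped ramps, a form in which its continuity is evident. *)
definition polygonal :: "nat \<Rightarrow> (nat \<Rightarrow> 'x::real_vector) \<Rightarrow> real \<Rightarrow> 'x" where
  "polygonal N xs s = xs 0 + (\<Sum>k<N. max 0 (min 1 (s - real k)) *\<^sub>R (xs (Suc k) - xs k))"

lemma polygonal_eq:
  fixes xs :: "nat \<Rightarrow> 'x::real_vector"
  assumes s: "0 \<le> s" "s \<le> real N"
  shows "polygonal N xs s = (let n = nat \<lfloor>s\<rfloor> in
    if n \<ge> N then xs N else xs n + (s - real n) *\<^sub>R (xs (Suc n) - xs n))"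
proof -
  define n where "n = nat \<lfloor>s\<rfloor>"
  have n: "real n \<le> s" "s < real n + 1" using s unfolding n_def by linarith+
  define F where "F k = max 0 (min 1 (s - real k)) *\<^sub>R (xs (Suc k) - xs k)" for k
  have telescope: "(\<Sum>k<m. xs (Suc k) - xs k) = xs m - xs 0" for m
    by (rule sum_lessThan_telescope)
  show ?thesis
  proof (cases "n \<ge> N")
    case True
    then have "(\<Sum>k<N. F k) = (\<Sum>k<N. xs (Suc k) - xs k)"
      using n s by (intro sum.cong) (auto simp: F_def)
    then show ?thesis
      using True unfolding polygonal_def F_def[symmetric] n_def[symmetric] telescope Let_def by simp
  next
    case False
    have "(\<Sum>k<N. F k) = (\<Sum>k<n. F k) + (\<Sum>k=n..<N. F k)"
      using False by (metis le_less_linear less_imp_le_nat lessThan_atLeast0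
          sum.atLeastLessThan_concat zero_le)
    also have "(\<Sum>k=n..<N. F k) = F n + (\<Sum>k=Suc n..<N. F k)"
      using False by (intro sum.atLeast_Suc_lessThan) simp
    also have "(\<Sum>k=Suc n..<N. F k) = 0"
      using n by (intro sum.neutral ballI) (auto simp: F_def)
    also have "(\<Sum>k<n. F k) = (\<Sum>k<n. xs (Suc k) - xs k)"
      using n by (intro sum.cong refl) (auto simp: F_def)
    also have "F n = (s - real n) *\<^sub>R (xs (Suc n) - xs n)"
      using n by (simp add: F_def)
    finally show ?thesis
      using False unfolding polygonal_def F_def[symmetric] n_def[symmetric] telescope Let_def by simp
  qed
qed

lemma interp_eq_polygonal:
  assumes "T > 0" "N \<ge> 1" "t \<in> {0..T}"
  shows "interp T N xs t = polygonal N xs (t / (T / real N))"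
proof -
  have "0 \<le> t / (T / real N)" "t / (T / real N) \<le> real N"
    using assms by (auto simp: field_simps)
  then show ?thesis using assms(3) unfolding interp_def by (simp add: polygonal_eq Let_def)
qed

lemma continuous_on_interp:
  fixes xs :: "nat \<Rightarrow> 'x::real_normed_vector"
  assumes T: "T > 0" and N: "N \<ge> 1"
  shows "continuous_on {0..T} (interp T N xs)"
proof -
  have "continuous_on {0..T} (\<lambda>t. polygonal N xs (t / (T / real N)))"
    unfolding polygonal_def using T N by (intro continuous_intros) auto
  then show ?thesis
    by (rule continuous_on_eq) (simp add: interp_eq_polygonal[OF T N])
qed

lemma interp_cong: "(\<And>n. n \<le> N \<Longrightarrow> xs n = ys n) \<Longrightarrow> interp T N xs = interp T N ys"
  unfolding interp_def Let_def by (intro restrict_ext) auto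

lemma measurable_interp:
  assumes T: "T > 0" and N: "N \<ge> 1"
  shows "(interp T N :: (nat \<Rightarrow> 'x::{real_normed_vector,second_countable_topology}) \<Rightarrow> _)
    \<in> tuples N \<rightarrow>\<^sub>M curve_space T"
  unfolding curve_space_def
proof (rule measurable_restrict_space2)
  show "(interp T N :: (nat \<Rightarrow> 'x) \<Rightarrow> _) \<in> space (tuples N)
      \<rightarrow> {\<gamma> \<in> PiE {0..T} (\<lambda>_. UNIV). continuous_on {0..T} \<gamma>}"
  proof
    fix xs :: "nat \<Rightarrow> 'x"
    have "interp T N xs \<in> extensional {0..T}" unfolding interp_def by (rule restrict_extensional)
    then show "interp T N xs \<in> {\<gamma> \<in> PiE {0..T} (\<lambda>_. UNIV). continuous_on {0..T} \<gamma>}"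
      using continuous_on_interp[OF T N, of xs] by (simp add: PiE_iff)
  qed
  show "(interp T N :: (nat \<Rightarrow> 'x) \<Rightarrow> _) \<in> tuples N \<rightarrow>\<^sub>M PiM {0..T} (\<lambda>_. borel)"
  proof -
    have "(\<lambda>xs :: nat \<Rightarrow> 'x. if N \<le> n then xs N else xs n + r *\<^sub>R (xs (Suc n) - xs n)) \<in> borel_measurable (tuples N)"
      for n r by (cases "N \<le> n") simp_all
    then show ?thesis unfolding interp_def Let_def by (intro measurable_restrict)
  qed
qed

section \<open>Euler chains driven by independent noise\<close>

locale euler_chain = prob_space P
  for P :: "'w measure" +
  fixes U :: "'u measure" and g :: "'x::{real_normed_vector,second_countable_topology} \<Rightarrow> 'u \<Rightarrow> 'x"
    and \<tau> :: real and N :: nat and X :: "nat \<Rightarrow> 'w \<Rightarrow> 'x" and V :: "nat \<Rightarrow> 'w \<Rightarrow> 'u"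
  assumes prob_space_U: "prob_space U"
    and measurable_g: "(\<lambda>(x, u). g x u) \<in> borel_measurable (borel \<Otimes>\<^sub>M U)"
    and measurable_X0: "X 0 \<in> borel_measurable P"
    and measurable_V: "V k \<in> P \<rightarrow>\<^sub>M U"
    and distr_V: "distr P U (V k) = U"
    and indep_X0_V: "indep_sets (\<lambda>i. case i of
        None \<Rightarrow> {X 0 -` A \<inter> space P | A. A \<in> sets borel}
      | Some k \<Rightarrow> {V k -` A \<inter> space P | A. A \<in> sets U}) UNIV"
    and X_Suc: "n < N \<Longrightarrow> \<omega> \<in> space P \<Longrightarrow> X (Suc n) \<omega> = X n \<omega> + \<tau> *\<^sub>R g (X n \<omega>) (V n \<omega>)"
begin

abbreviation \<mu>0 :: "'x measure" where "\<mu>0 \<equiv> distr P borel (X 0)"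

definition trajectory :: "nat \<Rightarrow> 'w \<Rightarrow> nat \<Rightarrow> 'x" where
  "trajectory m \<omega> = (\<lambda>n\<in>{..m}. X n \<omega>)"

lemma prob_space_\<mu>0: "prob_space \<mu>0" and sets_\<mu>0: "sets \<mu>0 = sets borel"
  using prob_space_distr[OF measurable_X0] by simp_all

lemma measurable_X_wrt:
  assumes Q: "space Q = space P" and "X 0 \<in> borel_measurable Q"
    and "\<And>k. k < n \<Longrightarrow> V k \<in> Q \<rightarrow>\<^sub>M U" and "n \<le> N"
  shows "X n \<in> borel_measurable Q"
  using assms(2-)
proof (induction n)
  case 0
  then show ?case by simp
next
  case (Suc n)
  have "(\<lambda>\<omega>. (\<lambda>(x, u). g x u) (X n \<omega>, V n \<omega>)) \<in> borel_measurable Q"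
    using Suc by (intro measurable_compose[OF measurable_Pair measurable_g]) auto
  then have "(\<lambda>\<omega>. X n \<omega> + \<tau> *\<^sub>R g (X n \<omega>) (V n \<omega>)) \<in> borel_measurable Q"
    using Suc by simp
  then show ?case
    using Suc.prems by (subst measurable_cong[where g="\<lambda>\<omega>. X n \<omega> + \<tau> *\<^sub>R g (X n \<omega>) (V n \<omega>)"])
      (simp_all add: Q X_Suc)
qed

lemma measurable_X: "n \<le> N \<Longrightarrow> X n \<in> borel_measurable P"
  using measurable_X_wrt[OF refl measurable_X0 measurable_V] .

lemma measurable_trajectory: "m \<le> N \<Longrightarrow> trajectory m \<in> P \<rightarrow>\<^sub>M tuples m"
  unfolding trajectory_def by (intro measurable_restrict measurable_X) auto

definition source_events :: "nat option \<Rightarrow> 'w set set" where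
  "source_events i = (case i of
      None \<Rightarrow> {X 0 -` A \<inter> space P | A. A \<in> sets borel}
    | Some k \<Rightarrow> {V k -` A \<inter> space P | A. A \<in> sets U})"

definition past :: "nat \<Rightarrow> 'w measure" where
  "past m = sigma (space P) (\<Union>i\<in>insert None (Some ` {..<m}). source_events i)"

lemma sets_past: "sets (past m) = sigma_sets (space P) (\<Union>i\<in>insert None (Some ` {..<m}). source_events i)"
  and space_past: "space (past m) = space P"
proof -
  have "source_events i \<subseteq> Pow (space P)" for i
    unfolding source_events_def by (auto split: option.split)
  then show "sets (past m) = sigma_sets (space P) (\<Union>i\<in>insert None (Some ` {..<m}). source_events i)"
    and "space (past m) = space P"
    unfolding past_def by (auto intro!: sets_measure_of space_measure_of)
qed

lemma measurable_trajectory_past: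
  assumes m: "m \<le> N"
  shows "trajectory m \<in> past m \<rightarrow>\<^sub>M tuples m"
proof -
  have X0: "X 0 \<in> borel_measurable (past m)"
    by (rule measurableI)
      (auto simp: sets_past space_past source_events_def intro!: sigma_sets.Basic)
  have V: "V k \<in> past m \<rightarrow>\<^sub>M U" if "k < m" for k
  proof (rule measurableI)
    show "V k \<omega> \<in> space U" if "\<omega> \<in> space (past m)" for \<omega>
      using measurable_space[OF measurable_V] that by (simp add: space_past)
    show "V k -` A \<inter> space (past m) \<in> sets (past m)" if "A \<in> sets U" for A
      using \<open>k < m\<close> that unfolding sets_past space_past
      by (intro sigma_sets.Basic) (auto simp: source_events_def)
  qed
  show ?thesis
    unfolding trajectory_def
  proof (rule measurable_restrict)
    fix n assume "n \<in> {..m}"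
    then show "X n \<in> borel_measurable (past m)"
      using m by (intro measurable_X_wrt[OF space_past X0 V]) auto
  qed
qed

lemma indep_set_trajectory_noise:
  assumes m: "m < N"
  shows "indep_set (sigma_sets (space P) {trajectory m -` A \<inter> space P | A. A \<in> sets (tuples m)})
    (sigma_sets (space P) {V m -` A \<inter> space P | A. A \<in> sets U})"
proof -
  define I where "I = case_bool (insert None (Some ` {..<m})) {Some m}"
  have past_present: "indep_sets (\<lambda>b. sigma_sets (space P) (\<Union>i\<in>I b. source_events i)) UNIV"
  proof (rule indep_sets_collect_sigma)
    show "indep_sets source_events (\<Union>b\<in>UNIV. I b)"
      unfolding source_events_def[abs_def] by (rule indep_sets_mono_index[OF _ indep_X0_V]) simp
    show "Int_stable (source_events i)" for i
      unfolding source_events_def by (cases i) (simp_all only: option.case Int_stable_vimage_sets)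
    show "disjoint_family_on I UNIV"
      unfolding disjoint_family_on_def I_def by (auto split: bool.split)
  qed
  have "{trajectory m -` A \<inter> space P | A. A \<in> sets (tuples m)}
      \<subseteq> sigma_sets (space P) (\<Union>i\<in>I True. source_events i)"
    using measurable_sets[OF measurable_trajectory_past] m
    unfolding sets_past space_past I_def by auto
  moreover have "{V m -` A \<inter> space P | A. A \<in> sets U} \<subseteq> sigma_sets (space P) (\<Union>i\<in>I False. source_events i)"
    by (auto simp: source_events_def I_def intro!: sigma_sets.Basic)
  ultimately have "sigma_sets (space P) {trajectory m -` A \<inter> space P | A. A \<in> sets (tuples m)}
      \<subseteq> sigma_sets (space P) (\<Union>i\<in>I True. source_events i)"
    "sigma_sets (space P) {V m -` A \<inter> space P | A. A \<in> sets U}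
      \<subseteq> sigma_sets (space P) (\<Union>i\<in>I False. source_events i)"
    by (simp_all add: sigma_sets_mono)
  then show ?thesis
    unfolding indep_set_def by (intro indep_sets_mono_sets[OF past_present]) (simp split: bool.split)
qed

lemma distr_trajectory_noise:
  assumes m: "m < N"
  shows "distr P (tuples m \<Otimes>\<^sub>M U) (\<lambda>\<omega>. (trajectory m \<omega>, V m \<omega>))
    = distr P (tuples m) (trajectory m) \<Otimes>\<^sub>M U"
proof -
  have "distr P (tuples m \<Otimes>\<^sub>M U) (\<lambda>\<omega>. (trajectory m \<omega>, V m \<omega>))
      = distr P (tuples m) (trajectory m) \<Otimes>\<^sub>M distr P U (V m)"
    by (rule distr_Pair_eq_pair_measure_if_indep_set[OF measurable_trajectory[OF less_imp_le[OF m]]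
        measurable_V indep_set_trajectory_noise[OF m] sigma_sets_superset_generator
        sigma_sets_superset_generator])
  then show ?thesis unfolding distr_V .
qed

lemma distr_X_noise:
  assumes m: "m < N"
  shows "distr P (borel \<Otimes>\<^sub>M U) (\<lambda>\<omega>. (X m \<omega>, V m \<omega>)) = distr P borel (X m) \<Otimes>\<^sub>M U"
proof -
  have "{X m -` A \<inter> space P | A. A \<in> sets borel}
      \<subseteq> {trajectory m -` A \<inter> space P | A. A \<in> sets (tuples m)}"
  proof safe
    fix A :: "'x set" assume "A \<in> sets borel"
    then have "(\<lambda>xs. xs m) -` A \<inter> space (tuples m) \<in> sets (tuples m)"
      by (intro measurable_sets[OF measurable_component_singleton]) auto
    moreover have "X m -` A \<inter> space P = trajectory m -` ((\<lambda>xs. xs m) -` A \<inter> space (tuples m)) \<inter> space P"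
      by (auto simp: trajectory_def space_PiM)
    ultimately show "\<exists>B. X m -` A \<inter> space P = trajectory m -` B \<inter> space P \<and> B \<in> sets (tuples m)"
      by blast
  qed
  also have "\<dots> \<subseteq> sigma_sets (space P) {trajectory m -` A \<inter> space P | A. A \<in> sets (tuples m)}"
    by (rule sigma_sets_superset_generator)
  finally have "distr P (borel \<Otimes>\<^sub>M U) (\<lambda>\<omega>. (X m \<omega>, V m \<omega>)) = distr P borel (X m) \<Otimes>\<^sub>M distr P U (V m)"
    by (rule distr_Pair_eq_pair_measure_if_indep_set[OF measurable_X[OF less_imp_le[OF m]]
        measurable_V indep_set_trajectory_noise[OF m] _ sigma_sets_superset_generator])
  then show ?thesis unfolding distr_V .
qed

lemma eulerM_eq_distr_X: "n \<le> N \<Longrightarrow> eulerM U g \<mu>0 \<tau> n = distr P borel (X n)"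
proof (induction n)
  case 0
  then show ?case by simp
next
  case (Suc n)
  then have n: "n < N" by simp
  have "eulerM U g \<mu>0 \<tau> (Suc n) = distr (eulerM U g \<mu>0 \<tau> n \<Otimes>\<^sub>M U) borel (\<lambda>(x, u). x + \<tau> *\<^sub>R g x u)"
    by (rule eulerM_Suc_eq_distr_pair[OF measurable_g sets_\<mu>0])
  also have "\<dots> = distr (distr P (borel \<Otimes>\<^sub>M U) (\<lambda>\<omega>. (X n \<omega>, V n \<omega>))) borel (\<lambda>(x, u). x + \<tau> *\<^sub>R g x u)"
    using Suc n by (simp add: distr_X_noise)
  also have "\<dots> = distr P borel ((\<lambda>(x, u). x + \<tau> *\<^sub>R g x u) \<circ> (\<lambda>\<omega>. (X n \<omega>, V n \<omega>)))"
    using n by (intro distr_distr measurable_euler_step(1)[OF measurable_g refl] measurable_Pair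
        measurable_X measurable_V) simp
  also have "\<dots> = distr P borel (X (Suc n))"
    by (rule distr_cong) (auto simp: X_Suc n)
  finally show ?case .
qed

lemma eulerT_eq_distr_X:
  assumes n: "n < N"
  shows "eulerT U g \<mu>0 \<tau> n = distr P (borel \<Otimes>\<^sub>M borel) (\<lambda>\<omega>. (X n \<omega>, X (Suc n) \<omega>))"
proof -
  have "eulerT U g \<mu>0 \<tau> n
      = distr (eulerM U g \<mu>0 \<tau> n \<Otimes>\<^sub>M U) (borel \<Otimes>\<^sub>M borel) (\<lambda>(x, u). (x, x + \<tau> *\<^sub>R g x u))"
    by (rule eulerT_eq_distr_pair[OF measurable_g sets_\<mu>0])
  also have "\<dots> = distr (distr P (borel \<Otimes>\<^sub>M U) (\<lambda>\<omega>. (X n \<omega>, V n \<omega>))) (borel \<Otimes>\<^sub>M borel)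
      (\<lambda>(x, u). (x, x + \<tau> *\<^sub>R g x u))"
    using n by (simp add: eulerM_eq_distr_X distr_X_noise)
  also have "\<dots> = distr P (borel \<Otimes>\<^sub>M borel) ((\<lambda>(x, u). (x, x + \<tau> *\<^sub>R g x u)) \<circ> (\<lambda>\<omega>. (X n \<omega>, V n \<omega>)))"
    using n by (intro distr_distr measurable_euler_step(2)[OF measurable_g refl] measurable_Pair
        measurable_X measurable_V) simp
  also have "\<dots> = distr P (borel \<Otimes>\<^sub>M borel) (\<lambda>\<omega>. (X n \<omega>, X (Suc n) \<omega>))"
    by (rule distr_cong) (auto simp: X_Suc n)
  finally show ?thesis .
qed

lemma AE_kernel_eq_step_kernel:
  assumes K: "is_disintegration (eulerT U g \<mu>0 \<tau> m) K" and m: "m \<le> N"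
  shows "AE xs in distr P (tuples m) (trajectory m). K (xs m) = step_kernel U g \<tau> (xs m)"
proof -
  have "distr (distr P (tuples m) (trajectory m)) borel (\<lambda>xs. xs m) = distr P borel ((\<lambda>xs. xs m) \<circ> trajectory m)"
    using m by (intro distr_distr measurable_component_singleton measurable_trajectory) auto
  also have "\<dots> = eulerM U g \<mu>0 \<tau> m"
    using m by (simp add: eulerM_eq_distr_X comp_def trajectory_def cong: distr_cong)
  finally have "AE x in distr (distr P (tuples m) (trajectory m)) borel (\<lambda>xs. xs m). K x = step_kernel U g \<tau> x"
    using disintegration_eulerT_AE_step_kernel[OF prob_space_U measurable_g prob_space_\<mu>0 sets_\<mu>0 K]
    by (simp only:)
  then show ?thesis by (rule AE_distrD[rotated]) simp
qed

lemma bind_step_kernel_trajectory: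
  assumes m: "m < N"
  shows "distr P (tuples m) (trajectory m) \<bind>
      (\<lambda>xs. distr (step_kernel U g \<tau> (xs m)) (tuples (Suc m)) (\<lambda>y. xs(Suc m := y)))
    = distr P (tuples (Suc m)) (trajectory (Suc m))"
proof -
  have "distr P (tuples m) (trajectory m) \<bind>
      (\<lambda>xs. distr (step_kernel U g \<tau> (xs m)) (tuples (Suc m)) (\<lambda>y. xs(Suc m := y)))
    = distr (distr P (tuples m) (trajectory m) \<Otimes>\<^sub>M U) (tuples (Suc m)) (euler_extend g \<tau> m)"
    using m by (intro bind_step_kernel_eq_distr_pair_measure prob_space_U measurable_g
        prob_space_distr measurable_trajectory) simp_all
  also have "\<dots> = distr (distr P (tuples m \<Otimes>\<^sub>M U) (\<lambda>\<omega>. (trajectory m \<omega>, V m \<omega>)))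
      (tuples (Suc m)) (euler_extend g \<tau> m)"
    using distr_trajectory_noise[OF m] by simp
  also have "\<dots> = distr P (tuples (Suc m)) (euler_extend g \<tau> m \<circ> (\<lambda>\<omega>. (trajectory m \<omega>, V m \<omega>)))"
    using m by (intro distr_distr measurable_euler_extend measurable_g measurable_Pair
        measurable_trajectory measurable_V) simp
  also have "\<dots> = distr P (tuples (Suc m)) (trajectory (Suc m))"
    by (rule distr_cong) (auto simp: euler_extend_def trajectory_def X_Suc m fun_eq_iff le_Suc_eq)
  finally show ?thesis .
qed

lemma eulerAlpha_eq_distr_trajectory:
  assumes K: "\<forall>n<N. is_disintegration (eulerT U g \<mu>0 \<tau> n) (K n)"
  shows "1 \<le> m \<Longrightarrow> m \<le> N \<Longrightarrow> eulerAlpha (eulerT U g \<mu>0 \<tau>) K m = distr P (tuples m) (trajectory m)"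
proof (induction m rule: nat_induct_at_least)
  case base
  define pair_to_tuple :: "'x \<times> 'x \<Rightarrow> nat \<Rightarrow> 'x"
    where "pair_to_tuple = (\<lambda>(x, y). \<lambda>i\<in>{..1}. if i = 0 then x else y)"
  have "pair_to_tuple \<in> borel \<Otimes>\<^sub>M borel \<rightarrow>\<^sub>M tuples 1"
    unfolding pair_to_tuple_def case_prod_beta' by (intro measurable_restrict) simp
  moreover have "(\<lambda>\<omega>. (X 0 \<omega>, X 1 \<omega>)) \<in> P \<rightarrow>\<^sub>M borel \<Otimes>\<^sub>M borel"
    using base by (intro measurable_Pair measurable_X) simp_all
  ultimately have "eulerAlpha (eulerT U g \<mu>0 \<tau>) K 1
      = distr P (tuples 1) (pair_to_tuple \<circ> (\<lambda>\<omega>. (X 0 \<omega>, X 1 \<omega>)))"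
    using base by (simp add: eulerT_eq_distr_X distr_distr pair_to_tuple_def)
  also have "\<dots> = distr P (tuples 1) (trajectory 1)"
    by (rule distr_cong) (auto simp: pair_to_tuple_def trajectory_def fun_eq_iff le_Suc_eq)
  finally show ?case .
next
  case (Suc m)
  then have m: "1 \<le> m" "m < N" by simp_all
  have K_m: "K m \<in> borel \<rightarrow>\<^sub>M prob_algebra borel" "is_disintegration (eulerT U g \<mu>0 \<tau> m) (K m)"
    using K m unfolding is_disintegration_def by simp_all
  have "eulerAlpha (eulerT U g \<mu>0 \<tau>) K (Suc m) = distr P (tuples m) (trajectory m) \<bind>
      (\<lambda>xs. distr (K m (xs m)) (tuples (Suc m)) (\<lambda>y. xs(Suc m := y)))"
    using Suc m(1) by (cases m) simp_all
  also have "\<dots> = distr P (tuples m) (trajectory m) \<bind>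
      (\<lambda>xs. distr (step_kernel U g \<tau> (xs m)) (tuples (Suc m)) (\<lambda>y. xs(Suc m := y)))"
    by (rule bind_cong_AE[OF refl measurable_extend_tuple_kernel[OF K_m(1) sets_distr]
          measurable_extend_tuple_kernel[OF measurable_step_kernel[OF prob_space_U measurable_g] sets_distr]])
      (use AE_kernel_eq_step_kernel[OF K_m(2)] m in \<open>auto elim: AE_mp intro: AE_I2\<close>)
  also have "\<dots> = distr P (tuples (Suc m)) (trajectory (Suc m))"
    by (rule bind_step_kernel_trajectory[OF m(2)])
  finally show ?case .
qed

end

lemma euler_chain_SDF:
  fixes Xn :: "real \<Rightarrow> nat \<Rightarrow> 'w \<Rightarrow> 'x::{real_normed_vector,second_countable_topology}"
  assumes P: "prob_space P" and U: "prob_space U"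
    and g: "(\<lambda>(x, u). g x u) \<in> borel_measurable (borel \<Otimes>\<^sub>M U)"
    and SDF: "SDF P U g T Xc Xn V" and \<tau>: "\<tau> \<in> steps T"
  shows "euler_chain P U g \<tau> (nsteps T \<tau>) (Xn \<tau>) V"
proof -
  interpret prob_space P by fact
  define Z where "Z = (\<lambda>\<omega>. \<lambda>t\<in>steps T. Xn t 0 \<omega>)"
  note sdf = SDF[unfolded SDF_def, folded Z_def]
  have X0_Z: "{Xn \<tau> 0 -` A \<inter> space P | A. A \<in> sets borel}
      \<subseteq> {Z -` B \<inter> space P | B. B \<in> sets (PiM (steps T) (\<lambda>_. borel))}"
  proof safe
    fix A :: "'x set" assume "A \<in> sets borel"
    then have "(\<lambda>f. f \<tau>) -` A \<inter> space (PiM (steps T) (\<lambda>_. borel)) \<in> sets (PiM (steps T) (\<lambda>_. borel))"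
      by (intro measurable_sets[OF measurable_component_singleton[OF \<tau>]])
    moreover have "Xn \<tau> 0 -` A \<inter> space P = Z -` ((\<lambda>f. f \<tau>) -` A \<inter> space (PiM (steps T) (\<lambda>_. borel))) \<inter> space P"
      using \<tau> by (auto simp: Z_def space_PiM)
    ultimately show "\<exists>B. Xn \<tau> 0 -` A \<inter> space P = Z -` B \<inter> space P \<and> B \<in> sets (PiM (steps T) (\<lambda>_. borel))"
      by blast
  qed
  show ?thesis
  proof (rule euler_chain.intro[OF P euler_chain_axioms.intro])
    show "prob_space U" "(\<lambda>(x, u). g x u) \<in> borel_measurable (borel \<Otimes>\<^sub>M U)" by fact+
    show "Xn \<tau> 0 \<in> borel_measurable P" using sdf \<tau> by blast
    show "V k \<in> P \<rightarrow>\<^sub>M U" "distr P U (V k) = U" for k using sdf by blast+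
    show "indep_sets (\<lambda>i. case i of None \<Rightarrow> {Xn \<tau> 0 -` A \<inter> space P | A. A \<in> sets borel}
        | Some k \<Rightarrow> {V k -` A \<inter> space P | A. A \<in> sets U}) UNIV"
    proof (rule indep_sets_mono_sets)
      show "indep_sets (\<lambda>i. case i of None \<Rightarrow> {Z -` A \<inter> space P | A. A \<in> sets (PiM (steps T) (\<lambda>_. borel))}
          | Some k \<Rightarrow> {V k -` A \<inter> space P | A. A \<in> sets U}) UNIV"
        using conjunct1[OF conjunct2[OF conjunct2[OF sdf]]] .
      show "(case i of None \<Rightarrow> {Xn \<tau> 0 -` A \<inter> space P | A. A \<in> sets borel}
          | Some k \<Rightarrow> {V k -` A \<inter> space P | A. A \<in> sets U})
        \<subseteq> (case i of None \<Rightarrow> {Z -` A \<inter> space P | A. A \<in> sets (PiM (steps T) (\<lambda>_. borel))}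
          | Some k \<Rightarrow> {V k -` A \<inter> space P | A. A \<in> sets U})" for i
        using X0_Z by (cases i) simp_all
    qed
    show "n < nsteps T \<tau> \<Longrightarrow> \<omega> \<in> space P \<Longrightarrow> Xn \<tau> (Suc n) \<omega> = Xn \<tau> n \<omega> + \<tau> *\<^sub>R g (Xn \<tau> n \<omega>) (V n \<omega>)"
      for n \<omega> using sdf \<tau> by blast
  qed
qed

theorem proposition6p4:
  fixes U :: "'u measure" and g :: "'x::{real_inner,banach,second_countable_topology} \<Rightarrow> 'u \<Rightarrow> 'x"
    and L lam T :: real and P :: "'w measure"
    and Xc :: "real \<Rightarrow> 'w \<Rightarrow> real \<Rightarrow> 'x" and Xn :: "real \<Rightarrow> nat \<Rightarrow> 'w \<Rightarrow> 'x"
    and V :: "nat \<Rightarrow> 'w \<Rightarrow> 'u"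
  assumes "prob_space U" and "nonatomic U"
    and "(\<lambda>(x, u). g x u) \<in> borel_measurable (borel \<Otimes>\<^sub>M U)"
    and "\<And>x. (\<integral>\<^sup>+ u. ennreal ((norm (g x u))\<^sup>2) \<partial>U) \<le> ennreal (L * (1 + (norm x)\<^sup>2))"
    and "continuous_on UNIV (\<lambda>x. \<integral> u. g x u \<partial>U)"
    and "dissipative lam (\<lambda>x. \<integral> u. g x u \<partial>U)"
    and "prob_space P" and "standard_borel P"
    and "T > 0"
    and "SDF P U g T Xc Xn V"
    and "\<tau> \<in> steps T"
  shows "(\<exists>K. admissible_kernels U g (distr P borel (Xn \<tau> 0)) T (nsteps T \<tau>) K) \<and>
         (\<forall>K. admissible_kernels U g (distr P borel (Xn \<tau> 0)) T (nsteps T \<tau>) K \<longrightarrow>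
            euler_path_measure U g (distr P borel (Xn \<tau> 0)) T (nsteps T \<tau>) K
              = distr P (curve_space T) (Xc \<tau>))"
proof -
  let ?N = "nsteps T \<tau>"
  have N: "?N \<ge> 1" "T / real ?N = \<tau>" using steps_nsteps[OF assms(9,11)] by simp_all
  interpret euler_chain P U g \<tau> ?N "Xn \<tau>" V
    by (rule euler_chain_SDF[OF assms(7,1,3,10,11)])
  have admissible_iff: "admissible_kernels U g \<mu>0 T ?N K \<longleftrightarrow>
      (\<forall>n<?N. is_disintegration (eulerT U g \<mu>0 \<tau> n) (K n))" for K
    unfolding admissible_kernels_def N(2) ..
  show ?thesis
  proof (intro conjI allI impI exI)
    show "admissible_kernels U g \<mu>0 T ?N (\<lambda>_. step_kernel U g \<tau>)"
      unfolding admissible_iff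
      using disintegration_step_kernel[OF prob_space_U measurable_g prob_space_\<mu>0 sets_\<mu>0] by simp
    fix K assume "admissible_kernels U g \<mu>0 T ?N K"
    then have "euler_path_measure U g \<mu>0 T ?N K
        = distr (distr P (tuples ?N) (trajectory ?N)) (curve_space T) (interp T ?N)"
      unfolding euler_path_measure_def N(2) admissible_iff
      using eulerAlpha_eq_distr_trajectory[OF _ N(1)] by simp
    also have "\<dots> = distr P (curve_space T) (interp T ?N \<circ> trajectory ?N)"
      by (intro distr_distr measurable_interp measurable_trajectory assms(9) N(1) order.refl)
    also have "\<dots> = distr P (curve_space T) (Xc \<tau>)"
    proof (rule distr_cong[OF refl refl])
      fix \<omega> assume "\<omega> \<in> space P"
      then have "Xc \<tau> \<omega> = interp T ?N (\<lambda>n. Xn \<tau> n \<omega>)"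
        using assms(10,11) unfolding SDF_def by blast
      then show "(interp T ?N \<circ> trajectory ?N) \<omega> = Xc \<tau> \<omega>"
        by (auto simp: trajectory_def intro: interp_cong)
    qed
    finally show "euler_path_measure U g \<mu>0 T ?N K = distr P (curve_space T) (Xc \<tau>)" .
  qed
qed

end
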